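(* Let $L, L' \subset \mathbb{S}^2$ be two non-crossing loops and let $i, i' \in \{0,1\}$. Then at least one of the following holds: $$\Delta_L^{i} \subseteq \Delta_{L'}^{i'}, \qquad \Delta_{L'}^{i'} \subseteq \Delta_L^{i}, \qquad \Delta_L^{i} \cap \Delta_{L'}^{i'} \subseteq L \cap L', \qquad \Delta_L^{i} \cup \Delta_{L'}^{i'} = \mathbb{S}^2 .$$
   Context: $\mathbb{S}^2$ is the unit $2$-sphere. A loop is a subset of $\mathbb{S}^2$ homeomorphic to the circle $\mathbb{S}^1$. A loop $L$ divides $\mathbb{S}^2$ into two closed regions, denoted $\Delta_L^0$ and $\Delta_L^1$, each homeomorphic to a closed disk, with $\Delta_L^0 \cap \Delta_L^1 = L$. Two loops $L, L'$ are non-crossing if $L \subseteq \Delta_{L'}^0$ or $L \subseteq \Delta_{L'}^1$. *)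

theory Defs
  imports "HOL-Analysis.Analysis"
begin

definition S2 :: "(real^3) set" where
  "S2 = sphere 0 1"

definition is_loop :: "(real^3) set \<Rightarrow> bool" where
  "is_loop L \<longleftrightarrow> L \<subseteq> S2 \<and> L homeomorphic (sphere (0::real^2) 1)"

text \<open>The closed regions Delta_L^0, Delta_L^1 determined by a loop L: the closures of
  the connected components of S2 - L (by the Jordan curve theorem there are exactly two).\<close>
definition regions :: "(real^3) set \<Rightarrow> (real^3) set set" where
  "regions L = {closure C | C. C \<in> components (S2 - L)}"

definition non_crossing :: "(real^3) set \<Rightarrow> (real^3) set \<Rightarrow> bool" where
  "non_crossing L L' \<longleftrightarrow> (\<exists>D'\<in>regions L'. L \<subseteq> D')"

end

theory Submission
  imports Defs "HOL-Complex_Analysis.Contour_Integration"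
begin

(* Stereographic projection from a point p off L turns the planar Jordan curve theorem into its
  spherical form: S2 - L has exactly two components and L lies in the closure of each. The closure
  of the bounded planar component is compact, so p is adherent only to the other one and joins it.

  Given this, the alternatives follow from point-set topology alone. Non-crossing means that L
  avoids one component F' of S2 - L', so the connected set F' lies in a single component of
  S2 - L; whether this is the component under consideration, and whether the region of L' in
  question is the closure of F' or of the other component, gives the four cases. *)

lemma closure_component_Int:
  assumes "C \<in> components S"
  shows "closure C \<inter> S = C"
proof
  have C_sub: "C \<subseteq> closure C \<inter> S"
    using assms closure_subset in_components_subset by blast
  show "closure C \<inter> S \<subseteq> C"
  proof (rule components_maximal[OF assms])
    show "connected (closure C \<inter> S)"
      using connected_intermediate_closure[OF in_components_connected[OF assms] C_sub] by blast
    show "C \<inter> (closure C \<inter> S) \<noteq> {}"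
      using C_sub in_components_nonempty[OF assms] by blast
  qed blast
  show "C \<subseteq> closure C \<inter> S"
    by (fact C_sub)
qed

lemma closure_component_subset:
  assumes "closed X" "C \<in> components (X - L)"
  shows "closure C \<subseteq> C \<union> L"
proof -
  have "C \<subseteq> X"
    using in_components_subset[OF assms(2)] by blast
  then have "closure C \<subseteq> X"
    using assms(1) by (rule closure_minimal)
  then show ?thesis
    using closure_component_Int[OF assms(2)] by blast
qed

lemma connected_subset_component_or_disjoint_closure:
  assumes "U \<in> components S" "connected C" "C \<subseteq> S"
  shows "C \<subseteq> U \<or> closure C \<inter> U = {}"
proof (cases "C = {}")
  case False
  then obtain W where W: "W \<in> components S" "C \<subseteq> W"
    using assms exists_component_superset by blast
  show ?thesis
  proof (cases "W = U")
    case False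
    then have "W \<inter> U = {}"
      using W(1) assms(1) components_nonoverlap by blast
    moreover have "closure C \<inter> U \<subseteq> closure W \<inter> S \<inter> U"
      using W(2) assms(1) closure_mono in_components_subset by blast
    ultimately show ?thesis
      using closure_component_Int[OF W(1)] by blast
  qed (use W in blast)
qed simp

lemma components_image_homeomorphism:
  assumes "homeomorphism S T f g"
  shows "components T = (`) f ` components S"
proof -
  have "T = f ` S"
    using assms by (simp add: homeomorphism_def)
  then show ?thesis
    using connected_component_set_homeomorphism[OF assms]
    by (auto simp: components_def image_image)
qed

lemma components_Un_separated:
  assumes "connected A" "connected B" "A \<noteq> {}" "B \<noteq> {}"
    and "A \<inter> closure B = {}" "B \<inter> closure A = {}"
  shows "components (A \<union> B) = {A, B}"
proof -
  have sep: "separatedin euclidean A B"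
    using assms by (simp add: separatedin_def)
  have split: "C \<subseteq> A \<or> C \<subseteq> B" if "connected C" "C \<subseteq> A \<union> B" for C
    using connectedin_subset_separated_union[OF _ sep] that by simp
  have disj: "A \<inter> B = {}"
    using assms(5) closure_subset by blast
  have comp: "X \<in> components (A \<union> B)" if "X = A \<or> X = B" for X
    unfolding in_components_maximal
  proof (intro conjI allI impI)
    fix D assume "D \<noteq> {} \<and> X \<subseteq> D \<and> D \<subseteq> A \<union> B \<and> connected D"
    then show "D = X"
      using split[of D] that disj assms(3,4) by blast
  qed (use that assms in auto)
  have A_comp: "A \<in> components (A \<union> B)" and B_comp: "B \<in> components (A \<union> B)"
    using comp by simp_all
  have "C = A \<or> C = B" if C: "C \<in> components (A \<union> B)" for C
  proof -
    have "C \<inter> A \<noteq> {} \<or> C \<inter> B \<noteq> {}"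
      using split[OF in_components_connected[OF C] in_components_subset[OF C]]
        in_components_nonempty[OF C] by blast
    then show ?thesis
      using components_eq[OF C A_comp] components_eq[OF C B_comp] by blast
  qed
  then show ?thesis
    using A_comp B_comp by blast
qed

lemma components_insert_limit_point:
  fixes p :: "'a::t1_space"
  assumes comps: "components S = {A, B}" and "A \<inter> B = {}" "p \<notin> S"
    and "p \<notin> closure A" "p \<in> closure B"
  shows "components (insert p S) = {A, insert p B}"
proof -
  have A: "A \<in> components S" and B: "B \<in> components S"
    using comps by simp_all
  have "insert p S = A \<union> insert p B"
    using Union_components[of S] comps by simp
  moreover have "components (A \<union> insert p B) = {A, insert p B}"
  proof (rule components_Un_separated)
    show "connected A" "A \<noteq> {}"
      using in_components_connected[OF A] in_components_nonempty[OF A] .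
    show "connected (insert p B)"
      using assms(5) closure_subset[of B]
      by (intro connected_intermediate_closure[OF in_components_connected[OF B]]) blast+
    show "A \<inter> closure (insert p B) = {}" "insert p B \<inter> closure A = {}"
      using closure_component_Int[OF A] closure_component_Int[OF B] in_components_subset[OF A]
        in_components_subset[OF B] assms(2,4) by (auto simp: closure_insert)
  qed simp
  ultimately show ?thesis
    by simp
qed

lemma closure_continuous_image_bounded:
  fixes f :: "'a::heine_borel \<Rightarrow> 'b::t2_space"
  assumes "continuous_on (closure S) f" "bounded S"
  shows "closure (f ` S) = f ` closure S"
proof
  have "compact (f ` closure S)"
    using assms compact_closure compact_continuous_image by blast
  then show "closure (f ` S) \<subseteq> f ` closure S"
    by (simp add: closure_minimal closure_subset compact_imp_closed image_mono)
  show "f ` closure S \<subseteq> closure (f ` S)"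
    using assms(1) by (rule continuous_image_closure_subset) simp
qed

lemma closures_of_components_comparable:
  fixes X L L' :: "'a::topological_space set"
  assumes X: "closed X"
    and U: "U \<in> components (X - L)" and U': "U' \<in> components (X - L')"
    and comps': "components (X - L') = {E', F'}"
    and L'_E': "L' \<subseteq> closure E'" and L'_F': "L' \<subseteq> closure F'"
    and L_E': "L \<subseteq> closure E'"
  shows "closure U \<subseteq> closure U' \<or> closure U' \<subseteq> closure U \<or>
    closure U \<inter> closure U' \<subseteq> L \<inter> L' \<or> closure U \<union> closure U' = X"
proof -
  have E': "E' \<in> components (X - L')" and F': "F' \<in> components (X - L')"
    using comps' by simp_all
  have U_sub: "U \<subseteq> X - L" and F'_sub: "F' \<subseteq> X - L'"
    using in_components_subset[OF U] in_components_subset[OF F'] .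
  have clU: "closure U \<subseteq> U \<union> L" and clE': "closure E' \<subseteq> E' \<union> L'"
    and clF': "closure F' \<subseteq> F' \<union> L'"
    using closure_component_subset[OF X U] closure_component_subset[OF X E']
      closure_component_subset[OF X F'] .
  have cover': "X - L' = E' \<union> F'"
    using Union_components[of "X - L'"] comps' by simp
  have clU_X: "closure U \<subseteq> X" and clE'_X: "closure E' \<subseteq> X"
    using closure_minimal[OF _ X, of U] closure_minimal[OF _ X, of E'] U_sub
      in_components_subset[OF E'] by blast+
  show ?thesis
  proof (cases "E' = F'")
    case True
    then have "closure U \<subseteq> closure U'"
      using U' comps' cover' L'_E' closure_subset[of E'] clU_X by auto
    then show ?thesis
      by blast
  next
    case False
    then have "E' \<inter> F' = {}"
      using components_eq[OF E' F'] by blast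
    then have L_F': "L \<inter> F' = {}"
      using L_E' clE' F'_sub by blast
    have "U' = E' \<or> U' = F'"
      using U' comps' by simp
    moreover have "F' \<subseteq> U \<or> closure F' \<inter> U = {}"
      using F'_sub L_F' in_components_connected[OF F']
      by (intro connected_subset_component_or_disjoint_closure[OF U]) blast+
    moreover have "closure U \<union> closure E' = X" if "F' \<subseteq> U"
      using closure_mono[OF that] closure_subset[of E'] closure_subset[of F'] cover' L'_E'
        clU_X clE'_X by blast
    moreover have "closure U \<subseteq> closure E'" if "closure F' \<inter> U = {}"
      using that U_sub cover' L'_F' closure_subset[of F'] closure_mono[of U E'] by blast
    moreover have "closure U \<inter> closure F' \<subseteq> L \<inter> L'" if "closure F' \<inter> U = {}"
      using that clU clF' L_F' by blast
    ultimately show ?thesis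
      using closure_mono[of F' U] by blast
  qed
qed

lemma Jordan_curve_homeomorphic_circle:
  fixes K :: "complex set"
  assumes "K homeomorphic sphere (0::real^2) 1"
  obtains inner outer where "components (- K) = {inner, outer}" "inner \<inter> outer = {}"
    "bounded inner" "closure inner = inner \<union> K" "closure outer = outer \<union> K"
proof -
  have "sphere (0::complex) 1 homeomorphic sphere (0::real^2) 1"
    by (rule homeomorphic_spheres_gen) auto
  then obtain f g where hom: "homeomorphism (sphere (0::complex) 1) K f g"
    using assms homeomorphic_sym homeomorphic_trans by (metis homeomorphic_def)
  define c where "c = f \<circ> circlepath 0 1"
  have "simple_path c"
    unfolding c_def using hom
    by (intro simple_path_continuous_image)
       (auto simp: simple_path_circlepath homeomorphism_def intro: inj_on_inverseI)
  moreover have "pathfinish c = pathstart c"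
    by (simp add: c_def pathfinish_compose pathstart_compose)
  moreover have "path_image c = K"
    using hom by (simp add: c_def path_image_compose homeomorphism_def)
  ultimately obtain inner outer where J:
    "inner \<noteq> {}" "open inner" "connected inner" "outer \<noteq> {}" "open outer" "connected outer"
    "bounded inner" "inner \<inter> outer = {}" "inner \<union> outer = - K"
    "frontier inner = K" "frontier outer = K"
    by (metis Jordan_curve)
  have "components (- K) = {inner, outer}"
    using J by (intro components_open_unique) (auto simp: pairwise_def disjnt_def)
  moreover have "closure inner = inner \<union> K" "closure outer = outer \<union> K"
    using J closure_Un_frontier by metis+
  ultimately show ?thesis
    using that J by blast
qed

lemma S2_not_homeomorphic_circle: "\<not> S2 homeomorphic sphere (0::real^2) 1"
proof
  assume "S2 homeomorphic sphere (0::real^2) 1"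
  then obtain f g where "homeomorphism (sphere (0::real^3) 1) (sphere (0::real^2) 1) f g"
    by (auto simp: S2_def homeomorphic_def)
  then have "continuous_on (sphere (0::real^3) 1) f" "inj_on f (sphere (0::real^3) 1)"
    by (auto simp: homeomorphism_def intro: inj_on_inverseI)
  then have "DIM(real^3) \<le> DIM(real^2)"
    by (rule no_embedding_sphere_lowdim) simp
  then show False
    by simp
qed

lemma S2_delete_homeomorphic_plane:
  assumes "p \<in> S2"
  shows "S2 - {p} homeomorphic (UNIV :: complex set)"
proof -
  have e: "axis 3 (1::real) \<noteq> (0::real^3)"
    by simp
  have "S2 - {p} homeomorphic {x::real^3. axis 3 1 \<bullet> x = 0}"
    using assms homeomorphic_punctured_sphere_hyperplane[OF _ _ e, of 1 p 0] by (simp add: S2_def)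
  also have "\<dots> homeomorphic (UNIV :: complex set)"
    using e by (simp add: homeomorphic_affine_sets_eq affine_hyperplane)
  finally show ?thesis .
qed

lemma components_S2_delete_loop:
  assumes "L \<subseteq> S2" "L homeomorphic sphere (0::real^2) 1" "p \<in> S2" "p \<notin> L"
  obtains A B where "components (S2 - {p} - L) = {A, B}" "A \<inter> B = {}"
    "closure A = A \<union> L" "L \<subseteq> closure B"
proof -
  obtain h g where hom: "homeomorphism (S2 - {p}) (UNIV :: complex set) h g"
    using S2_delete_homeomorphic_plane[OF assms(3)] by (auto simp: homeomorphic_def)
  define K where "K = h ` L"
  have L_sub: "L \<subseteq> S2 - {p}"
    using assms by blast
  have homL: "homeomorphism L K h g"
    using homeomorphism_of_subsets[OF hom L_sub] K_def by simp
  then have "K homeomorphic sphere (0::real^2) 1"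
    using assms(2) homeomorphic_def homeomorphic_sym homeomorphic_trans by metis
  then obtain inner outer where J: "components (- K) = {inner, outer}" "inner \<inter> outer = {}"
    "bounded inner" "closure inner = inner \<union> K" "closure outer = outer \<union> K"
    by (rule Jordan_curve_homeomorphic_circle)
  have "inj_on h (S2 - {p})" "h ` (S2 - {p}) = UNIV"
    using hom by (auto simp: homeomorphism_def intro: inj_on_inverseI)
  then have "h ` (S2 - {p} - L) = - K"
    unfolding K_def using inj_on_image_set_diff[of h "S2 - {p}" "S2 - {p}" L] L_sub
    by (simp add: Compl_eq_Diff_UNIV)
  then have "homeomorphism (- K) (S2 - {p} - L) g h"
    using homeomorphism_of_subsets[OF hom, of "S2 - {p} - L" "- K"] homeomorphism_sym by blast
  then have comps: "components (S2 - {p} - L) = {g ` inner, g ` outer}"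
    using J(1) components_image_homeomorphism by fastforce
  have gK: "g ` K = L"
    using homL by (simp add: homeomorphism_def)
  have cont: "continuous_on UNIV g" and inj: "inj g"
    using hom by (auto simp: homeomorphism_def intro: inj_on_inverseI)
  show ?thesis
  proof (rule that[OF comps])
    show "g ` inner \<inter> g ` outer = {}"
      using J(2) inj by (simp add: image_Int[symmetric])
    show "closure (g ` inner) = g ` inner \<union> L"
      using closure_continuous_image_bounded[OF continuous_on_subset[OF cont] J(3)] J(4) gK
      by (simp add: image_Un)
    show "L \<subseteq> closure (g ` outer)"
      using continuous_image_closure_subset[OF cont, of outer] J(5) gK by (simp add: image_Un)
  qed
qed

lemma Jordan_curve_S2:
  assumes "L \<subseteq> S2" "L homeomorphic sphere (0::real^2) 1"
  obtains U V where "components (S2 - L) = {U, V}" "U \<noteq> V" "L \<subseteq> closure U" "L \<subseteq> closure V"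
proof -
  have "L \<noteq> S2"
    using assms(2) S2_not_homeomorphic_circle by blast
  then obtain p where p: "p \<in> S2" "p \<notin> L"
    using assms(1) by blast
  obtain A B where AB: "components (S2 - {p} - L) = {A, B}" "A \<inter> B = {}"
    "closure A = A \<union> L" "L \<subseteq> closure B"
    using components_S2_delete_loop[OF assms p] by blast
  have A_sub: "A \<subseteq> S2 - {p} - L" and AB_Un: "A \<union> B = S2 - {p} - L"
    using in_components_subset[of A "S2 - {p} - L"] Union_components[of "S2 - {p} - L"] AB(1)
    by simp_all
  have p_limit: "p islimpt S2"
  proof (rule connected_imp_perfect)
    show "connected S2"
      by (simp add: S2_def connected_sphere)
    have "- p \<noteq> p" "- p \<in> S2"
      using p(1) by (auto simp: S2_def neg_eq_iff_add_eq_0 scaleR_2[symmetric])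
    then show "S2 \<noteq> {x}" for x
      using p(1) by (metis singletonD)
  qed (use p in auto)
  have "S2 - {p} = A \<union> B \<union> L"
    using AB_Un assms(1) p(2) by blast
  then have "p \<in> closure A \<union> closure B \<union> closure L"
    using p_limit by (simp add: islimpt_in_closure closure_Un)
  moreover have "closure L \<subseteq> closure B"
    using AB(4) closure_minimal by blast
  ultimately have "p \<in> closure B"
    using AB(3) A_sub p(2) by blast
  then have "components (insert p (S2 - {p} - L)) = {A, insert p B}"
    using components_insert_limit_point[OF AB(1,2)] AB(3) A_sub p(2) by blast
  moreover have "insert p (S2 - {p} - L) = S2 - L"
    using p by blast
  ultimately have comps: "components (S2 - L) = {A, insert p B}"
    by simp
  show ?thesis
  proof (rule that[OF comps])
    show "A \<noteq> insert p B"
      using A_sub by blast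
    show "L \<subseteq> closure A"
      using AB(3) by blast
    show "L \<subseteq> closure (insert p B)"
      using AB(4) closure_mono by blast
  qed
qed

theorem mainTheorem1:
  fixes L L' :: "(real^3) set" and D D' :: "(real^3) set"
  assumes "is_loop L" and "is_loop L'"
    and "non_crossing L L'"
    and "D \<in> regions L" and "D' \<in> regions L'"
  shows "D \<subseteq> D' \<or> D' \<subseteq> D \<or> D \<inter> D' \<subseteq> L \<inter> L' \<or> D \<union> D' = S2"
proof -
  obtain U where U: "U \<in> components (S2 - L)" "D = closure U"
    using assms(4) unfolding regions_def by blast
  obtain U' where U': "U' \<in> components (S2 - L')" "D' = closure U'"
    using assms(5) unfolding regions_def by blast
  obtain E' where E': "E' \<in> components (S2 - L')" "L \<subseteq> closure E'"
    using assms(3) unfolding non_crossing_def regions_def by blast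
  have "L' \<subseteq> S2" "L' homeomorphic sphere (0::real^2) 1"
    using assms(2) by (simp_all add: is_loop_def)
  then obtain V1 V2 where J: "components (S2 - L') = {V1, V2}"
    "L' \<subseteq> closure V1" "L' \<subseteq> closure V2"
    by (metis Jordan_curve_S2)
  have L'_E': "L' \<subseteq> closure E'"
    using E'(1) J by auto
  obtain F' where F': "components (S2 - L') = {E', F'}" "L' \<subseteq> closure F'"
  proof (cases "E' = V1")
    case True
    then show ?thesis
      using that J by simp
  next
    case False
    then have "E' = V2"
      using E'(1) J(1) by simp
    then show ?thesis
      using that[of V1] J by (simp add: insert_commute)
  qed
  have "closed S2"
    by (simp add: S2_def)
  from closures_of_components_comparable[OF this U(1) U'(1) F'(1) L'_E' F'(2) E'(2)]
  show ?thesis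
    unfolding U(2) U'(2) .
qed

end
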